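(* Let $G$ be a group, $X$ a right $G$-set, $k$ a commutative ring, $A=\bigoplus_{\sigma\in G}A_\sigma$ a $G$-graded $k$-algebra, and suppose $z\in X$ satisfies $z\sigma=z$ for all $\sigma\in G$. Let $\mathcal C=A\otimes kX$ be the coring described in the context, with cointegral $\delta$ and $A$-central element $e=1_A\otimes z$. Then a module $M=\bigoplus_{x\in X}M_x$ graded by the $G$-set $X$ (viewed as a right $\mathcal C$-comodule) is formally $\mathbb X^{\mathcal C}_{\delta,e}$-smooth if and only if $M=M_z$ (i.e. $M_x=0$ for all $x\neq z$).
   Context: A right $A$-module graded by the $G$-set $X$ is a right $A$-module $M=\bigoplus_{x\in X}M_x$ (decomposition as $k$-modules) with $M_xA_\sigma\subseteq M_{x\sigma}$ for all $x\in X,\sigma\in G$. The $A$-coring $\mathcal C=A\otimes kX$ ($kX$ the free $k$-module on $X$) has left $A$-action on the first factor, right action $(a\otimes x)a_\sigma=aa_\sigma\otimes x\sigma$ for $a_\sigma\in A_\sigma$, coproduct $\Delta_{\mathcal C}(a\otimes x)=(a\otimes x)\otimes_A(1_A\otimes x)$ and counit $\varepsilon_{\mathcal C}(a\otimes x)=a$. Such a graded module $M$ is a right $\mathcal C$-comodule via $m_x\mapsto m_x\otimes_A(1_A\otimes x)$ for $m_x\in M_x$. $\mathcal C$ is coseparable with cointegral $\delta:\mathcal C\otimes_A\mathcal C\cong A\otimes kX\otimes kX\to A$, $a\otimes x\otimes y\mapsto a\delta_{x,y}$ (Kronecker delta). In general, for an $A$-coring $\mathcal C$ (coaction $m\mapsto\sum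 m_{(0)}\otimes_A m_{(1)}$) with cointegral $\delta$ and $e\in\mathcal C^A=\{c:ac=ca\ \forall a\in A\}$, the supplemented S-category $\mathbb X^{\mathcal C}_{\delta,e}$ has $\mathfrak X=\mathfrak M^{\mathcal C}$ (right comodules), $\bar{\mathfrak X}=\mathfrak M_A$ (right $A$-modules), $u^*$ forgetful, $u_*=u_!=-\otimes_A\mathcal C$, $\nu_M(m\otimes_A c)=\sum m_{(0)}\delta(m_{(1)}\otimes_A c)$, $\bar\eta_N(n)=n\otimes_A e$, and $r_N=\nu_{N\otimes_A\mathcal C}\circ(\bar\eta_N\otimes_A\mathcal C):N\otimes_A\mathcal C\to N\otimes_A\mathcal C$, $n\otimes_A c\mapsto\sum n\otimes_A e_{(1)}\delta(e_{(2)}\otimes_A c)$. A right $\mathcal C$-comodule $M$ is formally $\mathbb X^{\mathcal C}_{\delta,e}$-smooth if for every right $A$-module $N$ the map $\mathrm{Hom}^{\mathcal C}(M,N\otimes_A\mathcal C)\to\mathrm{Hom}^{\mathcal C}(M,N\otimes_A\mathcal C)$, $g\mapsto r_N\circ g$, is surjective. *)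

theory Defs
  imports "HOL-Algebra.Ring" "HOL-Algebra.Group"
begin

definition right_Gset :: "('g, 'b) monoid_scheme \<Rightarrow> 'x set \<Rightarrow> ('x \<Rightarrow> 'g \<Rightarrow> 'x) \<Rightarrow> bool" where
  "right_Gset G X act \<longleftrightarrow> group G
     \<and> (\<forall>x\<in>X. \<forall>\<sigma>\<in>carrier G. act x \<sigma> \<in> X)
     \<and> (\<forall>x\<in>X. act x \<one>\<^bsub>G\<^esub> = x)
     \<and> (\<forall>x\<in>X. \<forall>\<sigma>\<in>carrier G. \<forall>\<tau>\<in>carrier G. act (act x \<sigma>) \<tau> = act x (\<sigma> \<otimes>\<^bsub>G\<^esub> \<tau>))"

definition direct_sum_decomp :: "('a, 'b) ring_scheme \<Rightarrow> 'i set \<Rightarrow> ('i \<Rightarrow> 'a set) \<Rightarrow> bool" where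
  "direct_sum_decomp R I D \<longleftrightarrow>
     (\<forall>i\<in>I. subgroup (D i) (add_monoid R)) \<and>
     (\<forall>a\<in>carrier R. \<exists>!c. (\<forall>i\<in>I. c i \<in> D i) \<and> (\<forall>i. i \<notin> I \<longrightarrow> c i = \<zero>\<^bsub>R\<^esub>)
          \<and> finite {i\<in>I. c i \<noteq> \<zero>\<^bsub>R\<^esub>} \<and> a = finsum R c {i\<in>I. c i \<noteq> \<zero>\<^bsub>R\<^esub>})"

definition dcomp :: "('a, 'b) ring_scheme \<Rightarrow> 'i set \<Rightarrow> ('i \<Rightarrow> 'a set) \<Rightarrow> 'i \<Rightarrow> 'a \<Rightarrow> 'a" where
  "dcomp R I D i a = (THE c. (\<forall>i\<in>I. c i \<in> D i) \<and> (\<forall>i. i \<notin> I \<longrightarrow> c i = \<zero>\<^bsub>R\<^esub>)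
          \<and> finite {i\<in>I. c i \<noteq> \<zero>\<^bsub>R\<^esub>} \<and> a = finsum R c {i\<in>I. c i \<noteq> \<zero>\<^bsub>R\<^esub>}) i"

definition graded_ring :: "('a, 'c) ring_scheme \<Rightarrow> ('g, 'b) monoid_scheme \<Rightarrow> ('g \<Rightarrow> 'a set) \<Rightarrow> bool" where
  "graded_ring A G Agr \<longleftrightarrow> ring A \<and> group G \<and> direct_sum_decomp A (carrier G) Agr
     \<and> (\<forall>\<sigma>\<in>carrier G. \<forall>\<tau>\<in>carrier G. \<forall>a\<in>Agr \<sigma>. \<forall>b\<in>Agr \<tau>. a \<otimes>\<^bsub>A\<^esub> b \<in> Agr (\<sigma> \<otimes>\<^bsub>G\<^esub> \<tau>))"

definition right_module :: "('a, 'c) ring_scheme \<Rightarrow> ('n, 'd) ring_scheme \<Rightarrow> ('n \<Rightarrow> 'a \<Rightarrow> 'n) \<Rightarrow> bool" where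
  "right_module A N nact \<longleftrightarrow> ring A \<and> abelian_group N
     \<and> (\<forall>n\<in>carrier N. \<forall>a\<in>carrier A. nact n a \<in> carrier N)
     \<and> (\<forall>n\<in>carrier N. \<forall>n'\<in>carrier N. \<forall>a\<in>carrier A. nact (n \<oplus>\<^bsub>N\<^esub> n') a = nact n a \<oplus>\<^bsub>N\<^esub> nact n' a)
     \<and> (\<forall>n\<in>carrier N. \<forall>a\<in>carrier A. \<forall>b\<in>carrier A. nact n (a \<oplus>\<^bsub>A\<^esub> b) = nact n a \<oplus>\<^bsub>N\<^esub> nact n b)
     \<and> (\<forall>n\<in>carrier N. \<forall>a\<in>carrier A. \<forall>b\<in>carrier A. nact (nact n a) b = nact n (a \<otimes>\<^bsub>A\<^esub> b))
     \<and> (\<forall>n\<in>carrier N. nact n \<one>\<^bsub>A\<^esub> = n)"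

definition Xgraded_module :: "('a, 'c) ring_scheme \<Rightarrow> ('g, 'b) monoid_scheme \<Rightarrow> ('g \<Rightarrow> 'a set)
    \<Rightarrow> 'x set \<Rightarrow> ('x \<Rightarrow> 'g \<Rightarrow> 'x) \<Rightarrow> ('m, 'd) ring_scheme \<Rightarrow> ('m \<Rightarrow> 'a \<Rightarrow> 'm) \<Rightarrow> ('x \<Rightarrow> 'm set) \<Rightarrow> bool" where
  "Xgraded_module A G Agr X act M mact Mgr \<longleftrightarrow> right_module A M mact \<and> direct_sum_decomp M X Mgr
     \<and> (\<forall>x\<in>X. \<forall>\<sigma>\<in>carrier G. \<forall>m\<in>Mgr x. \<forall>a\<in>Agr \<sigma>. mact m a \<in> Mgr (act x \<sigma>))"

(* ---------------------------------------------------------------------------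
   Concrete model of the coring C = A \<otimes> kX and of N \<otimes>_A C.
   * An element of C = A \<otimes> kX is a finitely supported c : X \<Rightarrow> A  (c = \<Sum>_x c x \<otimes> x).
   * An element of C \<otimes>_A C \<cong> A \<otimes> kX \<otimes> kX is a finitely supported F : X \<times> X \<Rightarrow> A.
   * An element of N \<otimes>_A C \<cong> N \<otimes> kX is a finitely supported \<phi> : X \<Rightarrow> N,
     \<phi> = \<Sum>_y \<phi> y \<otimes>_A (1_A \<otimes> y).
   --------------------------------------------------------------------------- *)

definition supp :: "('n, 'd) ring_scheme \<Rightarrow> 'x set \<Rightarrow> ('x \<Rightarrow> 'n) \<Rightarrow> 'x set" where
  "supp N X \<phi> = {y\<in>X. \<phi> y \<noteq> \<zero>\<^bsub>N\<^esub>}"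

(* carrier of N \<otimes>_A C (also used for C itself with N = A) *)
definition tensC :: "('n, 'd) ring_scheme \<Rightarrow> 'x set \<Rightarrow> ('x \<Rightarrow> 'n) set" where
  "tensC N X = {\<phi>. (\<forall>y. \<phi> y \<in> carrier N) \<and> (\<forall>y. y \<notin> X \<longrightarrow> \<phi> y = \<zero>\<^bsub>N\<^esub>) \<and> finite (supp N X \<phi>)}"

(* right A-action on N \<otimes>_A C:  (n \<otimes> (1 \<otimes> y)) a = \<Sum>_\<sigma> n a_\<sigma> \<otimes> (1 \<otimes> y\<sigma>) *)
definition tens_act :: "('a, 'c) ring_scheme \<Rightarrow> ('g, 'b) monoid_scheme \<Rightarrow> ('g \<Rightarrow> 'a set)
    \<Rightarrow> 'x set \<Rightarrow> ('x \<Rightarrow> 'g \<Rightarrow> 'x) \<Rightarrow> ('n, 'd) ring_scheme \<Rightarrow> ('n \<Rightarrow> 'a \<Rightarrow> 'n)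
    \<Rightarrow> ('x \<Rightarrow> 'n) \<Rightarrow> 'a \<Rightarrow> ('x \<Rightarrow> 'n)" where
  "tens_act A G Agr X act N nact \<phi> a = (\<lambda>w. finsum N (\<lambda>(y, \<sigma>). nact (\<phi> y) (dcomp A (carrier G) Agr \<sigma> a))
      {(y, \<sigma>). y \<in> supp N X \<phi> \<and> \<sigma> \<in> carrier G \<and> dcomp A (carrier G) Agr \<sigma> a \<noteq> \<zero>\<^bsub>A\<^esub> \<and> act y \<sigma> = w})"

(* coproduct of C:  \<Delta>(a \<otimes> x) = (a \<otimes> x) \<otimes>_A (1 \<otimes> x)  \<mapsto>  a \<otimes> x \<otimes> x *)
definition cor_Delta :: "('a, 'c) ring_scheme \<Rightarrow> ('x \<Rightarrow> 'a) \<Rightarrow> ('x \<times> 'x \<Rightarrow> 'a)" where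
  "cor_Delta A c = (\<lambda>(u, v). if u = v then c u else \<zero>\<^bsub>A\<^esub>)"

(* cointegral \<delta> : A \<otimes> kX \<otimes> kX \<rightarrow> A,  a \<otimes> x \<otimes> y \<mapsto> a \<delta>_{x,y} *)
definition cor_delta :: "('a, 'c) ring_scheme \<Rightarrow> 'x set \<Rightarrow> ('x \<times> 'x \<Rightarrow> 'a) \<Rightarrow> 'a" where
  "cor_delta A X F = finsum A (\<lambda>x. F (x, x)) {x\<in>X. F (x, x) \<noteq> \<zero>\<^bsub>A\<^esub>}"

(* the element e = 1_A \<otimes> z of C *)
definition cor_e :: "('a, 'c) ring_scheme \<Rightarrow> 'x \<Rightarrow> ('x \<Rightarrow> 'a)" where
  "cor_e A z = (\<lambda>x. if x = z then \<one>\<^bsub>A\<^esub> else \<zero>\<^bsub>A\<^esub>)"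

(* the element (1 \<otimes> v) \<otimes>_A (1 \<otimes> y) = 1 \<otimes> v \<otimes> y of C \<otimes>_A C *)
definition unit_tensor :: "('a, 'c) ring_scheme \<Rightarrow> 'x \<Rightarrow> 'x \<Rightarrow> ('x \<times> 'x \<Rightarrow> 'a)" where
  "unit_tensor A v y = (\<lambda>p. if p = (v, y) then \<one>\<^bsub>A\<^esub> else \<zero>\<^bsub>A\<^esub>)"

(* r_N : N \<otimes>_A C \<rightarrow> N \<otimes>_A C,  n \<otimes> c \<mapsto> \<Sum> n \<otimes> e_(1) \<delta>(e_(2) \<otimes> c), for a general
   map \<delta> : C \<otimes>_A C \<rightarrow> A and e \<in> C.  With \<phi> = \<Sum>_y \<phi> y \<otimes> (1 \<otimes> y) and
   \<Delta>(e) = \<Sum>_{u,v} (E(u,v) \<otimes> u) \<otimes>_A (1 \<otimes> v), writing b = \<delta>((1\<otimes>v)\<otimes>_A(1\<otimes>y)),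
   (E(u,v) \<otimes> u) b = \<Sum>_\<tau> E(u,v) b_\<tau> \<otimes> u\<tau>, and n \<otimes>_A (a \<otimes> w) = n a \<otimes> (1 \<otimes> w). *)
definition r_map :: "('a, 'c) ring_scheme \<Rightarrow> ('g, 'b) monoid_scheme \<Rightarrow> ('g \<Rightarrow> 'a set)
    \<Rightarrow> 'x set \<Rightarrow> ('x \<Rightarrow> 'g \<Rightarrow> 'x) \<Rightarrow> (('x \<times> 'x \<Rightarrow> 'a) \<Rightarrow> 'a) \<Rightarrow> ('x \<Rightarrow> 'a)
    \<Rightarrow> ('n, 'd) ring_scheme \<Rightarrow> ('n \<Rightarrow> 'a \<Rightarrow> 'n) \<Rightarrow> ('x \<Rightarrow> 'n) \<Rightarrow> ('x \<Rightarrow> 'n)" where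
  "r_map A G Agr X act \<delta> e N nact \<phi> = (\<lambda>w. finsum N
      (\<lambda>(y, u, v, \<tau>). nact (\<phi> y) (cor_Delta A e (u, v) \<otimes>\<^bsub>A\<^esub> dcomp A (carrier G) Agr \<tau> (\<delta> (unit_tensor A v y))))
      {(y, u, v, \<tau>). y \<in> supp N X \<phi> \<and> u \<in> X \<and> v \<in> X \<and> cor_Delta A e (u, v) \<noteq> \<zero>\<^bsub>A\<^esub>
          \<and> \<tau> \<in> carrier G \<and> dcomp A (carrier G) Agr \<tau> (\<delta> (unit_tensor A v y)) \<noteq> \<zero>\<^bsub>A\<^esub>
          \<and> act u \<tau> = w})"

(* coaction of N \<otimes>_A C (= N \<otimes> \<Delta>): \<phi> \<mapsto> \<Sum>_x (\<phi> x \<otimes> (1 \<otimes> x)) \<otimes>_A (1 \<otimes> x),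
   an element of (N \<otimes>_A C) \<otimes>_A C modelled as x \<mapsto> (its coefficient in N \<otimes>_A C) *)
definition tens_coact :: "('n, 'd) ring_scheme \<Rightarrow> ('x \<Rightarrow> 'n) \<Rightarrow> 'x \<Rightarrow> ('x \<Rightarrow> 'n)" where
  "tens_coact N \<phi> x = (\<lambda>y. if y = x then \<phi> y else \<zero>\<^bsub>N\<^esub>)"

(* coaction of the X-graded module M: m \<mapsto> \<Sum>_x m_x \<otimes>_A (1 \<otimes> x), modelled as x \<mapsto> m_x *)
definition mod_coact :: "('m, 'd) ring_scheme \<Rightarrow> 'x set \<Rightarrow> ('x \<Rightarrow> 'm set) \<Rightarrow> 'x \<Rightarrow> 'm \<Rightarrow> 'm" where
  "mod_coact M X Mgr x m = dcomp M X Mgr x m"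

(* Hom^C(M, N \<otimes>_A C): right A-linear maps compatible with the coactions,
   i.e. \<rho>_{N\<otimes>C} \<circ> g = (g \<otimes> C) \<circ> \<rho>_M *)
definition HomC :: "('a, 'c) ring_scheme \<Rightarrow> ('g, 'b) monoid_scheme \<Rightarrow> ('g \<Rightarrow> 'a set)
    \<Rightarrow> 'x set \<Rightarrow> ('x \<Rightarrow> 'g \<Rightarrow> 'x) \<Rightarrow> ('m, 'e) ring_scheme \<Rightarrow> ('m \<Rightarrow> 'a \<Rightarrow> 'm) \<Rightarrow> ('x \<Rightarrow> 'm set)
    \<Rightarrow> ('n, 'd) ring_scheme \<Rightarrow> ('n \<Rightarrow> 'a \<Rightarrow> 'n) \<Rightarrow> ('m \<Rightarrow> 'x \<Rightarrow> 'n) set" where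
  "HomC A G Agr X act M mact Mgr N nact = {g.
      (\<forall>m\<in>carrier M. g m \<in> tensC N X)
    \<and> (\<forall>m\<in>carrier M. \<forall>m'\<in>carrier M. g (m \<oplus>\<^bsub>M\<^esub> m') = (\<lambda>w. g m w \<oplus>\<^bsub>N\<^esub> g m' w))
    \<and> (\<forall>m\<in>carrier M. \<forall>a\<in>carrier A. g (mact m a) = tens_act A G Agr X act N nact (g m) a)
    \<and> (\<forall>m\<in>carrier M. \<forall>x\<in>X. tens_coact N (g m) x = g (mod_coact M X Mgr x m))}"

(* M is formally smooth for the S-category built from delta and e; N ranges over right A-modules on a fixed element type *)
definition formally_smooth :: "'n itself \<Rightarrow> ('a, 'c) ring_scheme \<Rightarrow> ('g, 'b) monoid_scheme \<Rightarrow> ('g \<Rightarrow> 'a set)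
    \<Rightarrow> 'x set \<Rightarrow> ('x \<Rightarrow> 'g \<Rightarrow> 'x) \<Rightarrow> (('x \<times> 'x \<Rightarrow> 'a) \<Rightarrow> 'a) \<Rightarrow> ('x \<Rightarrow> 'a)
    \<Rightarrow> ('m, 'e) ring_scheme \<Rightarrow> ('m \<Rightarrow> 'a \<Rightarrow> 'm) \<Rightarrow> ('x \<Rightarrow> 'm set) \<Rightarrow> bool" where
  "formally_smooth _ A G Agr X act \<delta> e M mact Mgr \<longleftrightarrow>
     (\<forall>(N :: 'n ring) nact. right_module A N nact \<longrightarrow>
        (\<forall>g\<in>HomC A G Agr X act M mact Mgr N nact.
           \<exists>g'\<in>HomC A G Agr X act M mact Mgr N nact.
              \<forall>m\<in>carrier M. r_map A G Agr X act \<delta> e N nact (g' m) = g m))"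

end

theory Submission
  imports Defs
begin

(* Since
   \<Delta>(e) = (1 \<otimes> z) \<otimes>_A (1 \<otimes> z), the map r_N takes values in N \<otimes> (1 \<otimes> z), and on that part
   it is the identity, because z\<tau> = z and the homogeneous components 1_\<tau> of 1 sum to 1.
   - If M = M_z, compatibility with the coactions forces every comodule map g : M \<rightarrow> N \<otimes>_A C
     to land in N \<otimes> (1 \<otimes> z); there r_N fixes g, so g itself is a preimage of g under r_N.
   - Conversely, the grading coaction m \<mapsto> \<Sum>_x m_x \<otimes> (1 \<otimes> x) of M is a comodule map
     M \<rightarrow> M \<otimes>_A C; lifting it through r_M shows that m_x = 0 for every x \<noteq> z. *)

lemma (in comm_monoid) finprod_product:
  assumes "finite S" "finite T" "f \<in> S \<times> T \<rightarrow> carrier G"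
  shows "finprod G f (S \<times> T) = finprod G (\<lambda>s. finprod G (\<lambda>t. f (s, t)) T) S"
proof -
  have "S \<times> T = (\<Union>s\<in>S. Pair s ` T)" by auto
  then have "finprod G f (S \<times> T) = finprod G (\<lambda>s. finprod G f (Pair s ` T)) S"
    using assms by (auto intro!: finprod_UN_disjoint simp: pairwise_def disjnt_def)
  also have "\<dots> = finprod G (\<lambda>s. finprod G (\<lambda>t. f (s, t)) T) S"
  proof (rule finprod_cong')
    fix s assume "s \<in> S"
    then show "finprod G f (Pair s ` T) = finprod G (\<lambda>t. f (s, t)) T"
      using assms by (subst finprod_reindex) (auto simp: inj_on_def Pi_def)
  qed (use assms in \<open>auto simp: Pi_def\<close>)
  finally show ?thesis .
qed

lemma (in comm_monoid) finprod_fibres: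
  assumes "finite S" "f \<in> S \<rightarrow> carrier G"
  shows "finprod G f S = finprod G (\<lambda>i. finprod G f {j\<in>S. h j = i}) (h ` S)"
proof -
  have "finprod G f (\<Union>i\<in>h ` S. {j\<in>S. h j = i}) = finprod G (\<lambda>i. finprod G f {j\<in>S. h j = i}) (h ` S)"
    using assms by (intro finprod_UN_disjoint) (auto simp: pairwise_def disjnt_def)
  moreover have "(\<Union>i\<in>h ` S. {j\<in>S. h j = i}) = S" by auto
  ultimately show ?thesis by simp
qed

lemma additive_map_zero:
  assumes "abelian_group G" "abelian_group H" "h \<in> carrier G \<rightarrow> carrier H"
    "\<And>a b. a \<in> carrier G \<Longrightarrow> b \<in> carrier G \<Longrightarrow> h (a \<oplus>\<^bsub>G\<^esub> b) = h a \<oplus>\<^bsub>H\<^esub> h b"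
  shows "h \<zero>\<^bsub>G\<^esub> = \<zero>\<^bsub>H\<^esub>"
proof -
  interpret G: abelian_group G by (rule assms(1))
  interpret H: abelian_group H by (rule assms(2))
  have "h \<zero>\<^bsub>G\<^esub> \<oplus>\<^bsub>H\<^esub> h \<zero>\<^bsub>G\<^esub> = h \<zero>\<^bsub>G\<^esub>" using assms(4)[of "\<zero>\<^bsub>G\<^esub>" "\<zero>\<^bsub>G\<^esub>"] by simp
  moreover have "h \<zero>\<^bsub>G\<^esub> \<in> carrier H" using assms(3) by blast
  ultimately show ?thesis using H.add.l_cancel_one' by metis
qed

lemma additive_map_finsum:
  assumes "abelian_group G" "abelian_group H" "h \<in> carrier G \<rightarrow> carrier H"
    "\<And>a b. a \<in> carrier G \<Longrightarrow> b \<in> carrier G \<Longrightarrow> h (a \<oplus>\<^bsub>G\<^esub> b) = h a \<oplus>\<^bsub>H\<^esub> h b"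
    "finite S" "f \<in> S \<rightarrow> carrier G"
  shows "h (finsum G f S) = finsum H (\<lambda>i. h (f i)) S"
proof -
  interpret G: abelian_group G by (rule assms(1))
  interpret H: abelian_group H by (rule assms(2))
  show ?thesis using assms(5,6)
  proof (induction S rule: finite_induct)
    case empty
    then show ?case using additive_map_zero[OF assms(1-4)] by simp
  next
    case (insert x S)
    have "h (finsum G f (insert x S)) = h (f x \<oplus>\<^bsub>G\<^esub> finsum G f S)"
      using insert by (simp add: G.finsum_insert)
    also have "\<dots> = h (f x) \<oplus>\<^bsub>H\<^esub> finsum H (\<lambda>i. h (f i)) S"
      using insert assms(4)[of "f x" "finsum G f S"] by (simp add: Pi_def)
    also have "\<dots> = finsum H (\<lambda>i. h (f i)) (insert x S)"
      using insert assms(3) by (auto simp: H.finsum_insert Pi_def)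
    finally show ?case .
  qed
qed

context abelian_group
begin

lemma dsd_subset: "direct_sum_decomp G I D \<Longrightarrow> i \<in> I \<Longrightarrow> D i \<subseteq> carrier G"
  unfolding direct_sum_decomp_def using subgroup.subset by fastforce

lemma dsd_zero: "direct_sum_decomp G I D \<Longrightarrow> i \<in> I \<Longrightarrow> \<zero> \<in> D i"
  unfolding direct_sum_decomp_def using subgroup.one_closed by fastforce

lemma dsd_add: "direct_sum_decomp G I D \<Longrightarrow> i \<in> I \<Longrightarrow> a \<in> D i \<Longrightarrow> b \<in> D i \<Longrightarrow> a \<oplus> b \<in> D i"
  unfolding direct_sum_decomp_def using subgroup.m_closed by fastforce

lemma dsd_finsum:
  assumes "direct_sum_decomp G I D" "i \<in> I" "finite S" "\<forall>j\<in>S. f j \<in> D i"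
  shows "finsum G f S \<in> D i"
  using assms(3,4)
proof (induction S rule: finite_induct)
  case empty
  then show ?case using dsd_zero[OF assms(1,2)] by simp
next
  case (insert x S)
  then have "finsum G f (insert x S) = f x \<oplus> finsum G f S"
    using dsd_subset[OF assms(1,2)] by (auto intro!: finsum_insert)
  then show ?case using insert dsd_add[OF assms(1,2)] by simp
qed

abbreviation (input) is_decomposition :: "'i set \<Rightarrow> ('i \<Rightarrow> 'a set) \<Rightarrow> 'a \<Rightarrow> ('i \<Rightarrow> 'a) \<Rightarrow> bool" where
  "is_decomposition I D a c \<equiv> (\<forall>i\<in>I. c i \<in> D i) \<and> (\<forall>i. i \<notin> I \<longrightarrow> c i = \<zero>)
     \<and> finite {i\<in>I. c i \<noteq> \<zero>} \<and> a = finsum G c {i\<in>I. c i \<noteq> \<zero>}"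

lemma dcomp_decomposition:
  assumes "direct_sum_decomp G I D" "a \<in> carrier G"
  shows "is_decomposition I D a (\<lambda>i. dcomp G I D i a)"
proof -
  have "\<exists>!c. is_decomposition I D a c"
    using assms unfolding direct_sum_decomp_def by blast
  then show ?thesis unfolding dcomp_def by (rule theI')
qed

context
  fixes I :: "'i set" and D :: "'i \<Rightarrow> 'a set"
  assumes dsd: "direct_sum_decomp G I D"
begin

lemma dcomp_mem: "a \<in> carrier G \<Longrightarrow> i \<in> I \<Longrightarrow> dcomp G I D i a \<in> D i"
  using dcomp_decomposition[OF dsd] by blast

lemma dcomp_outside: "a \<in> carrier G \<Longrightarrow> i \<notin> I \<Longrightarrow> dcomp G I D i a = \<zero>"
  using dcomp_decomposition[OF dsd] by blast

lemma dcomp_closed: "a \<in> carrier G \<Longrightarrow> dcomp G I D i a \<in> carrier G"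
proof (cases "i \<in> I")
  case True
  then show "a \<in> carrier G \<Longrightarrow> ?thesis" using dcomp_mem dsd_subset[OF dsd] by blast
qed (simp add: dcomp_outside)

lemma dcomp_support_finite: "a \<in> carrier G \<Longrightarrow> finite {i\<in>I. dcomp G I D i a \<noteq> \<zero>}"
  using dcomp_decomposition[OF dsd] by blast

lemma dcomp_sum:
  assumes "a \<in> carrier G" "finite S" "S \<subseteq> I" "{i\<in>I. dcomp G I D i a \<noteq> \<zero>} \<subseteq> S"
  shows "a = finsum G (\<lambda>i. dcomp G I D i a) S"
proof -
  have "a = finsum G (\<lambda>i. dcomp G I D i a) {i\<in>I. dcomp G I D i a \<noteq> \<zero>}"
    using dcomp_decomposition[OF dsd assms(1)] by (elim conjE)
  also have "\<dots> = finsum G (\<lambda>i. dcomp G I D i a) S"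
  proof (rule add.finprod_mono_neutral_cong_left)
    show "(\<lambda>i. dcomp G I D i a) \<in> S \<rightarrow> carrier G" using dcomp_closed[OF assms(1)] by blast
    show "\<And>i. i \<in> S - {i\<in>I. dcomp G I D i a \<noteq> \<zero>} \<Longrightarrow> dcomp G I D i a = \<zero>"
      using assms(3) by blast
  qed (use assms(2,4) in simp_all)
  finally show ?thesis .
qed

lemma dcomp_unique:
  assumes "\<forall>i\<in>I. c i \<in> D i" "\<forall>i. i \<notin> I \<longrightarrow> c i = \<zero>"
    "finite S" "S \<subseteq> I" "\<forall>i\<in>I - S. c i = \<zero>" "a = finsum G c S"
  shows "dcomp G I D i a = c i"
proof -
  have c_closed: "c \<in> S \<rightarrow> carrier G" using assms(1,4) dsd_subset[OF dsd] by fast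
  have supp: "{i\<in>I. c i \<noteq> \<zero>} \<subseteq> S" using assms(5) by blast
  have "finsum G c {i\<in>I. c i \<noteq> \<zero>} = finsum G c S"
    using assms(3,4) supp c_closed by (intro add.finprod_mono_neutral_cong_left) auto
  then have c_dec: "is_decomposition I D a c"
    using assms(1,2,6) finite_subset[OF supp assms(3)] by (intro conjI) auto
  have a_closed: "a \<in> carrier G" using assms(6) c_closed by simp
  have "\<exists>!c. is_decomposition I D a c"
    using dsd a_closed unfolding direct_sum_decomp_def by blast
  then have "(\<lambda>i. dcomp G I D i a) = c"
    unfolding dcomp_def using c_dec by (intro the1_equality)
  then show ?thesis by (rule fun_cong)
qed

lemma dcomp_homogeneous:
  assumes "x \<in> I" "a \<in> D x"
  shows "dcomp G I D w a = (if w = x then a else \<zero>)"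
proof (rule dcomp_unique)
  have "a \<in> carrier G" using assms dsd_subset[OF dsd] by blast
  then show "a = finsum G (\<lambda>i. if i = x then a else \<zero>) {x}"
    by (simp add: finsum_insert)
qed (use assms dsd_zero[OF dsd] in auto)

lemma dcomp_add:
  assumes "a \<in> carrier G" "b \<in> carrier G"
  shows "dcomp G I D w (a \<oplus> b) = dcomp G I D w a \<oplus> dcomp G I D w b"
proof -
  define S where "S = {i\<in>I. dcomp G I D i a \<noteq> \<zero>} \<union> {i\<in>I. dcomp G I D i b \<noteq> \<zero>}"
  have S: "finite S" "S \<subseteq> I" unfolding S_def using dcomp_support_finite assms by auto
  have "a \<oplus> b = finsum G (\<lambda>i. dcomp G I D i a) S \<oplus> finsum G (\<lambda>i. dcomp G I D i b) S"
    using dcomp_sum[OF assms(1) S] dcomp_sum[OF assms(2) S] unfolding S_def by auto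
  also have "\<dots> = finsum G (\<lambda>i. dcomp G I D i a \<oplus> dcomp G I D i b) S"
    using dcomp_closed assms by (simp add: Pi_def finsum_addf)
  finally have sum: "a \<oplus> b = finsum G (\<lambda>i. dcomp G I D i a \<oplus> dcomp G I D i b) S" .
  show ?thesis
    by (rule dcomp_unique[where S = S])
      (use S sum assms dcomp_mem dcomp_outside dsd_add[OF dsd] in \<open>auto simp: S_def\<close>)
qed

lemma dcomp_graded_finsum:
  assumes "finite J" "\<forall>j\<in>J. h j \<in> I \<and> f j \<in> D (h j)"
  shows "dcomp G I D i (finsum G f J) = finsum G f {j\<in>J. h j = i}"
proof (rule dcomp_unique)
  have f_closed: "f \<in> J \<rightarrow> carrier G" using assms(2) dsd_subset[OF dsd] by blast
  show "finsum G f J = finsum G (\<lambda>i. finsum G f {j\<in>J. h j = i}) (h ` J)"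
    using assms(1) f_closed by (rule add.finprod_fibres)
  show "\<forall>i\<in>I. finsum G f {j\<in>J. h j = i} \<in> D i"
    using assms by (auto intro!: dsd_finsum[OF dsd])
  have "finsum G f {j\<in>J. h j = i} = \<zero>" if "i \<notin> h ` J" for i
  proof -
    have "{j\<in>J. h j = i} = {}" using that by blast
    then show ?thesis by (simp only: finsum_empty)
  qed
  moreover have "i \<notin> h ` J" if "i \<notin> I" for i using that assms(2) by blast
  ultimately show "\<forall>i. i \<notin> I \<longrightarrow> finsum G f {j\<in>J. h j = i} = \<zero>"
    and "\<forall>i\<in>I - h ` J. finsum G f {j\<in>J. h j = i} = \<zero>"
    by blast+
qed (use assms in auto)

end

end

lemma right_moduleD:
  assumes "right_module A N nact"
  shows "ring A" "abelian_group N"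
    "\<And>n a. n \<in> carrier N \<Longrightarrow> a \<in> carrier A \<Longrightarrow> nact n a \<in> carrier N"
    "\<And>n n' a. n \<in> carrier N \<Longrightarrow> n' \<in> carrier N \<Longrightarrow> a \<in> carrier A \<Longrightarrow>
       nact (n \<oplus>\<^bsub>N\<^esub> n') a = nact n a \<oplus>\<^bsub>N\<^esub> nact n' a"
    "\<And>n a b. n \<in> carrier N \<Longrightarrow> a \<in> carrier A \<Longrightarrow> b \<in> carrier A \<Longrightarrow>
       nact n (a \<oplus>\<^bsub>A\<^esub> b) = nact n a \<oplus>\<^bsub>N\<^esub> nact n b"
    "\<And>n. n \<in> carrier N \<Longrightarrow> nact n \<one>\<^bsub>A\<^esub> = n"
  using assms unfolding right_module_def by auto

lemma right_module_zero_right: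
  assumes "right_module A N nact" "n \<in> carrier N"
  shows "nact n \<zero>\<^bsub>A\<^esub> = \<zero>\<^bsub>N\<^esub>"
  using assms right_moduleD[OF assms(1)]
  by (intro additive_map_zero[of A N "nact n"]) (auto intro: ring.is_abelian_group)

lemma right_module_finsum_right:
  assumes "right_module A N nact" "n \<in> carrier N" "finite S" "f \<in> S \<rightarrow> carrier A"
  shows "nact n (finsum A f S) = finsum N (\<lambda>i. nact n (f i)) S"
  using assms right_moduleD[OF assms(1)]
  by (intro additive_map_finsum[of A N "nact n"]) (auto intro: ring.is_abelian_group)

lemma right_module_finsum_left:
  assumes "right_module A N nact" "a \<in> carrier A" "finite S" "f \<in> S \<rightarrow> carrier N"
  shows "nact (finsum N f S) a = finsum N (\<lambda>i. nact (f i) a) S"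
  using assms right_moduleD[OF assms(1)]
  by (intro additive_map_finsum[of N N "\<lambda>n. nact n a"]) auto

(* Since \<Delta>(e) = (1 \<otimes> z) \<otimes>_A (1 \<otimes> z) and z is G-fixed, r_N takes values in N \<otimes> (1 \<otimes> z):
   this holds for any map \<delta>. *)
lemma r_map_outside:
  assumes "abelian_group N" "\<forall>\<sigma>\<in>carrier G. act z \<sigma> = z" "w \<noteq> z"
  shows "r_map A G Agr X act \<delta> (cor_e A z) N nact \<phi> w = \<zero>\<^bsub>N\<^esub>"
proof -
  have "{(y, u, v, \<tau>). y \<in> supp N X \<phi> \<and> u \<in> X \<and> v \<in> X \<and> cor_Delta A (cor_e A z) (u, v) \<noteq> \<zero>\<^bsub>A\<^esub>
          \<and> \<tau> \<in> carrier G \<and> dcomp A (carrier G) Agr \<tau> (\<delta> (unit_tensor A v y)) \<noteq> \<zero>\<^bsub>A\<^esub>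
          \<and> act u \<tau> = w} = {}"
    using assms unfolding cor_Delta_def cor_e_def by (auto split: if_splits)
  note index = this
  interpret N: abelian_group N by (rule assms(1))
  show ?thesis unfolding r_map_def index by simp
qed

lemma r_map_zero:
  assumes "abelian_group N" "supp N X \<phi> = {}"
  shows "r_map A G Agr X act \<delta> e N nact \<phi> w = \<zero>\<^bsub>N\<^esub>"
proof -
  interpret N: abelian_group N by (rule assms(1))
  have "{(y, u, v, \<tau>). y \<in> supp N X \<phi> \<and> u \<in> X \<and> v \<in> X \<and> cor_Delta A e (u, v) \<noteq> \<zero>\<^bsub>A\<^esub>
          \<and> \<tau> \<in> carrier G \<and> dcomp A (carrier G) Agr \<tau> (\<delta> (unit_tensor A v y)) \<noteq> \<zero>\<^bsub>A\<^esub>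
          \<and> act u \<tau> = w} = {}"
    using assms(2) by auto
  then show ?thesis unfolding r_map_def by (simp only: N.finsum_empty)
qed

lemma cor_delta_unit_tensor_diag:
  assumes "ring A" "\<one>\<^bsub>A\<^esub> \<noteq> \<zero>\<^bsub>A\<^esub>" "z \<in> X"
  shows "cor_delta A X (unit_tensor A z z) = \<one>\<^bsub>A\<^esub>"
proof -
  interpret A: ring A by (rule assms(1))
  have "{x\<in>X. unit_tensor A z z (x, x) \<noteq> \<zero>\<^bsub>A\<^esub>} = {z}"
    using assms(2,3) unfolding unit_tensor_def by auto
  then show ?thesis unfolding cor_delta_def by (simp add: unit_tensor_def A.finsum_insert)
qed

(* On n \<otimes> (1 \<otimes> z) with n \<noteq> 0, r_N is the identity in degree z:
   r(n \<otimes> (1 \<otimes> z)) = \<Sum>_\<tau> n 1_\<tau> \<otimes> (1 \<otimes> z\<tau>) = n 1 \<otimes> (1 \<otimes> z), as z\<tau> = z and \<Sum>_\<tau> 1_\<tau> = 1. *)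
lemma r_map_at_fixed_point:
  assumes graded: "graded_ring A G Agr" and N: "right_module A N nact"
    and z: "z \<in> X" and fixed: "\<forall>\<sigma>\<in>carrier G. act z \<sigma> = z"
    and \<phi>z: "\<phi> z \<in> carrier N" and nonzero: "\<phi> z \<noteq> \<zero>\<^bsub>N\<^esub>"
    and concentrated: "\<forall>w. w \<noteq> z \<longrightarrow> \<phi> w = \<zero>\<^bsub>N\<^esub>"
  shows "r_map A G Agr X act (cor_delta A X) (cor_e A z) N nact \<phi> z = \<phi> z"
proof -
  note module = right_moduleD[OF N]
  interpret N: abelian_group N by (rule module(2))
  interpret A: ring A by (rule module(1))
  have dsd_A: "direct_sum_decomp A (carrier G) Agr" using graded unfolding graded_ring_def by blast
  (* N \<noteq> 0 forces 1 \<noteq> 0 in A, so \<Delta>(e) has the single nonzero coefficient at (z, z). *)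
  have one: "\<one>\<^bsub>A\<^esub> \<noteq> \<zero>\<^bsub>A\<^esub>"
    using nonzero module(6)[OF \<phi>z] right_module_zero_right[OF N \<phi>z] by metis
  define T where "T = {\<tau>\<in>carrier G. dcomp A (carrier G) Agr \<tau> \<one>\<^bsub>A\<^esub> \<noteq> \<zero>\<^bsub>A\<^esub>}"
  have T: "finite T" "T \<subseteq> carrier G"
    unfolding T_def using A.dcomp_support_finite[OF dsd_A] by auto
  have components: "dcomp A (carrier G) Agr \<tau> \<one>\<^bsub>A\<^esub> \<in> carrier A" for \<tau>
    using A.dcomp_closed[OF dsd_A] by simp
  have "supp N X \<phi> = {z}" using concentrated nonzero z unfolding supp_def by auto
  then have index: "{(y, u, v, \<tau>). y \<in> supp N X \<phi> \<and> u \<in> X \<and> v \<in> X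
        \<and> cor_Delta A (cor_e A z) (u, v) \<noteq> \<zero>\<^bsub>A\<^esub> \<and> \<tau> \<in> carrier G
        \<and> dcomp A (carrier G) Agr \<tau> (cor_delta A X (unit_tensor A v y)) \<noteq> \<zero>\<^bsub>A\<^esub>
        \<and> act u \<tau> = z} = (\<lambda>\<tau>. (z, z, z, \<tau>)) ` T"
    using z fixed one cor_delta_unit_tensor_diag[OF module(1) one z]
    unfolding T_def cor_Delta_def cor_e_def by (auto split: if_splits)
  have "r_map A G Agr X act (cor_delta A X) (cor_e A z) N nact \<phi> z
      = finsum N (\<lambda>\<tau>. nact (\<phi> z) (dcomp A (carrier G) Agr \<tau> \<one>\<^bsub>A\<^esub>)) T"
    unfolding r_map_def index
    by (subst N.finsum_reindex) (auto simp: inj_on_def cor_Delta_def cor_e_def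
        cor_delta_unit_tensor_diag[OF module(1) one z] components module(3)[OF \<phi>z] Pi_def)
  also have "\<dots> = nact (\<phi> z) (finsum A (\<lambda>\<tau>. dcomp A (carrier G) Agr \<tau> \<one>\<^bsub>A\<^esub>) T)"
    using components by (intro right_module_finsum_right[OF N \<phi>z T(1), symmetric]) auto
  also have "\<dots> = nact (\<phi> z) \<one>\<^bsub>A\<^esub>"
    using A.dcomp_sum[OF dsd_A _ T] unfolding T_def by simp
  also have "\<dots> = \<phi> z" using module(6)[OF \<phi>z] .
  finally show ?thesis .
qed

lemma r_map_concentrated:
  assumes graded: "graded_ring A G Agr" and N: "right_module A N nact"
    and z: "z \<in> X" and fixed: "\<forall>\<sigma>\<in>carrier G. act z \<sigma> = z"
    and \<phi>: "\<phi> \<in> tensC N X" and concentrated: "\<forall>w. w \<noteq> z \<longrightarrow> \<phi> w = \<zero>\<^bsub>N\<^esub>"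
  shows "r_map A G Agr X act (cor_delta A X) (cor_e A z) N nact \<phi> = \<phi>"
proof
  fix w
  have N_abelian: "abelian_group N" by (rule right_moduleD(2)[OF N])
  have \<phi>z: "\<phi> z \<in> carrier N" using \<phi> unfolding tensC_def by blast
  consider "w \<noteq> z" | "w = z" "\<phi> z = \<zero>\<^bsub>N\<^esub>" | "w = z" "\<phi> z \<noteq> \<zero>\<^bsub>N\<^esub>" by blast
  then show "r_map A G Agr X act (cor_delta A X) (cor_e A z) N nact \<phi> w = \<phi> w"
  proof cases
    case 1
    then show ?thesis
      using r_map_outside[where G = G and act = act and z = z, OF N_abelian fixed 1] concentrated by simp
  next
    case 2
    then have "supp N X \<phi> = {}" using concentrated unfolding supp_def by auto
    then show ?thesis using r_map_zero[OF N_abelian] 2 by simp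
  next
    case 3
    then show ?thesis using r_map_at_fixed_point[where act = act and z = z, OF graded N z fixed \<phi>z 3(2) concentrated] by simp
  qed
qed

(* If M = M_z, every comodule map g : M \<rightarrow> N \<otimes>_A C lands in N \<otimes> (1 \<otimes> z): compatibility with the
   coactions gives g(m)_w = g(m_w)_w, and m_w = 0 for w \<noteq> z. *)
lemma HomC_concentrated:
  assumes M: "abelian_group M" "direct_sum_decomp M X Mgr" and N: "abelian_group N"
    and g: "g \<in> HomC A G Agr X act M mact Mgr N nact"
    and concentrated: "carrier M = Mgr z" and z: "z \<in> X"
    and m: "m \<in> carrier M" and w: "w \<noteq> z"
  shows "g m w = \<zero>\<^bsub>N\<^esub>"
proof -
  interpret M: abelian_group M by (rule M(1))
  have g_tensC: "\<And>m. m \<in> carrier M \<Longrightarrow> g m \<in> tensC N X"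
    and g_add: "\<And>m m'. m \<in> carrier M \<Longrightarrow> m' \<in> carrier M \<Longrightarrow> g (m \<oplus>\<^bsub>M\<^esub> m') = (\<lambda>w. g m w \<oplus>\<^bsub>N\<^esub> g m' w)"
    and g_coact: "\<And>m x. m \<in> carrier M \<Longrightarrow> x \<in> X \<Longrightarrow> tens_coact N (g m) x = g (mod_coact M X Mgr x m)"
    using g unfolding HomC_def by blast+
  show ?thesis
  proof (cases "w \<in> X")
    case False
    then show ?thesis using g_tensC[OF m] unfolding tensC_def by blast
  next
    case True
    have g_zero: "g \<zero>\<^bsub>M\<^esub> w = \<zero>\<^bsub>N\<^esub>"
      using g_tensC g_add unfolding tensC_def by (intro additive_map_zero[OF M(1) N]) auto
    have "mod_coact M X Mgr w m = \<zero>\<^bsub>M\<^esub>"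
      using M.dcomp_homogeneous[OF M(2) z] m w concentrated unfolding mod_coact_def by simp
    then have "g m w = g \<zero>\<^bsub>M\<^esub> w"
      using fun_cong[OF g_coact[OF m True], of w] unfolding tens_coact_def by simp
    then show ?thesis using g_zero by simp
  qed
qed

context
  fixes A :: "'a ring" and G :: "'g monoid" and Agr :: "'g \<Rightarrow> 'a set"
    and X :: "'x set" and act :: "'x \<Rightarrow> 'g \<Rightarrow> 'x"
    and M :: "'m ring" and mact :: "'m \<Rightarrow> 'a \<Rightarrow> 'm" and Mgr :: "'x \<Rightarrow> 'm set"
  assumes graded: "graded_ring A G Agr"
    and Gset: "right_Gset G X act"
    and Xgraded: "Xgraded_module A G Agr X act M mact Mgr"
begin

lemma module_M: "right_module A M mact"
  and dsd_M: "direct_sum_decomp M X Mgr"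
  and grading_M: "\<And>x \<sigma> m a. x \<in> X \<Longrightarrow> \<sigma> \<in> carrier G \<Longrightarrow> m \<in> Mgr x \<Longrightarrow> a \<in> Agr \<sigma> \<Longrightarrow>
     mact m a \<in> Mgr (act x \<sigma>)"
  using Xgraded unfolding Xgraded_module_def by blast+

lemma dsd_A: "direct_sum_decomp A (carrier G) Agr"
  using graded unfolding graded_ring_def by blast

lemma abelian_M: "abelian_group M" and abelian_A: "abelian_group A"
  using right_moduleD(1,2)[OF module_M] ring.is_abelian_group by blast+

lemma act_closed: "x \<in> X \<Longrightarrow> \<sigma> \<in> carrier G \<Longrightarrow> act x \<sigma> \<in> X"
  using Gset unfolding right_Gset_def by blast

lemma mact_expand:
  assumes m: "m \<in> carrier M" and a: "a \<in> carrier A"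
  defines "Sm \<equiv> {y\<in>X. dcomp M X Mgr y m \<noteq> \<zero>\<^bsub>M\<^esub>}"
    and "Sa \<equiv> {\<sigma>\<in>carrier G. dcomp A (carrier G) Agr \<sigma> a \<noteq> \<zero>\<^bsub>A\<^esub>}"
  shows "mact m a = finsum M (\<lambda>(y, \<sigma>). mact (dcomp M X Mgr y m) (dcomp A (carrier G) Agr \<sigma> a)) (Sm \<times> Sa)"
proof -
  interpret M: abelian_group M by (rule abelian_M)
  interpret A: abelian_group A by (rule abelian_A)
  note module = right_moduleD[OF module_M]
  have Sm: "finite Sm" "Sm \<subseteq> X" unfolding Sm_def using M.dcomp_support_finite[OF dsd_M m] by auto
  have Sa: "finite Sa" "Sa \<subseteq> carrier G" unfolding Sa_def using A.dcomp_support_finite[OF dsd_A a] by auto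
  have mC: "\<And>y. dcomp M X Mgr y m \<in> carrier M" using M.dcomp_closed[OF dsd_M m] .
  have aC: "\<And>\<sigma>. dcomp A (carrier G) Agr \<sigma> a \<in> carrier A" using A.dcomp_closed[OF dsd_A a] .
  have "mact m a = mact (finsum M (\<lambda>y. dcomp M X Mgr y m) Sm) a"
    using M.dcomp_sum[OF dsd_M m Sm] unfolding Sm_def by simp
  also have "\<dots> = finsum M (\<lambda>y. mact (dcomp M X Mgr y m) a) Sm"
    using mC by (intro right_module_finsum_left[OF module_M a Sm(1)]) auto
  also have "\<dots> = finsum M (\<lambda>y. mact (dcomp M X Mgr y m) (finsum A (\<lambda>\<sigma>. dcomp A (carrier G) Agr \<sigma> a) Sa)) Sm"
    using A.dcomp_sum[OF dsd_A a Sa] unfolding Sa_def by simp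
  also have "\<dots> = finsum M (\<lambda>y. finsum M (\<lambda>\<sigma>. mact (dcomp M X Mgr y m) (dcomp A (carrier G) Agr \<sigma> a)) Sa) Sm"
    using mC aC module(3) by (intro M.finsum_cong' refl right_module_finsum_right[OF module_M]) (auto simp: Sa)
  also have "\<dots> = finsum M (\<lambda>(y, \<sigma>). mact (dcomp M X Mgr y m) (dcomp A (carrier G) Agr \<sigma> a)) (Sm \<times> Sa)"
    using mC aC module(3) Sm Sa by (subst M.add.finprod_product) auto
  finally show ?thesis .
qed

(* The grading coaction m \<mapsto> (x \<mapsto> m_x) is right A-linear: the x-component of m a
   collects the products m_y a_\<sigma> with y\<sigma> = x, which is the A-action on M \<otimes>_A C. *)
lemma coaction_linear:
  assumes m: "m \<in> carrier M" and a: "a \<in> carrier A"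
  shows "(\<lambda>x. dcomp M X Mgr x (mact m a)) = tens_act A G Agr X act M mact (\<lambda>x. dcomp M X Mgr x m) a"
proof
  fix w
  interpret M: abelian_group M by (rule abelian_M)
  interpret A: abelian_group A by (rule abelian_A)
  define Sm where "Sm = {y\<in>X. dcomp M X Mgr y m \<noteq> \<zero>\<^bsub>M\<^esub>}"
  define Sa where "Sa = {\<sigma>\<in>carrier G. dcomp A (carrier G) Agr \<sigma> a \<noteq> \<zero>\<^bsub>A\<^esub>}"
  define f where "f = (\<lambda>(y, \<sigma>). mact (dcomp M X Mgr y m) (dcomp A (carrier G) Agr \<sigma> a))"
  have fin: "finite (Sm \<times> Sa)"
    unfolding Sm_def Sa_def
    using M.dcomp_support_finite[OF dsd_M m] A.dcomp_support_finite[OF dsd_A a] by blast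
  have homogeneous: "\<forall>(y, \<sigma>)\<in>Sm \<times> Sa. act y \<sigma> \<in> X \<and> f (y, \<sigma>) \<in> Mgr (act y \<sigma>)"
    unfolding Sm_def Sa_def f_def
    using act_closed grading_M M.dcomp_mem[OF dsd_M m] A.dcomp_mem[OF dsd_A a] by auto
  have "dcomp M X Mgr w (mact m a) = dcomp M X Mgr w (finsum M f (Sm \<times> Sa))"
    using mact_expand[OF m a] unfolding Sm_def Sa_def f_def by simp
  also have "\<dots> = finsum M f {j\<in>Sm \<times> Sa. (\<lambda>(y, \<sigma>). act y \<sigma>) j = w}"
    using homogeneous by (intro M.dcomp_graded_finsum[OF dsd_M fin]) auto
  also have "\<dots> = tens_act A G Agr X act M mact (\<lambda>x. dcomp M X Mgr x m) a w"
    unfolding tens_act_def supp_def f_def Sm_def Sa_def by (rule arg_cong[where f = "finsum M _"]) auto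
  finally show "dcomp M X Mgr w (mact m a) = tens_act A G Agr X act M mact (\<lambda>x. dcomp M X Mgr x m) a w" .
qed

lemma coaction_HomC: "(\<lambda>m x. mod_coact M X Mgr x m) \<in> HomC A G Agr X act M mact Mgr M mact"
proof -
  interpret M: abelian_group M by (rule abelian_M)
  have "(\<lambda>x. dcomp M X Mgr x m) \<in> tensC M X" if "m \<in> carrier M" for m
    unfolding tensC_def supp_def
    using that M.dcomp_closed[OF dsd_M] M.dcomp_outside[OF dsd_M] M.dcomp_support_finite[OF dsd_M] by blast
  moreover have "tens_coact M (\<lambda>y. dcomp M X Mgr y m) x = (\<lambda>y. dcomp M X Mgr y (dcomp M X Mgr x m))"
    if "m \<in> carrier M" "x \<in> X" for m x
    unfolding tens_coact_def using that M.dcomp_homogeneous[OF dsd_M] M.dcomp_mem[OF dsd_M] by auto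
  ultimately show ?thesis
    unfolding HomC_def mod_coact_def using M.dcomp_add[OF dsd_M] coaction_linear by auto
qed

(* If M = M_z then r_N \<circ> g = g for every comodule map g, so g' = g is a preimage. *)
lemma concentrated_imp_smooth:
  fixes z :: 'x
  assumes z: "z \<in> X" and fixed: "\<forall>\<sigma>\<in>carrier G. act z \<sigma> = z"
    and concentrated: "carrier M = Mgr z"
  shows "formally_smooth TYPE('n) A G Agr X act (cor_delta A X) (cor_e A z) M mact Mgr"
  unfolding formally_smooth_def
proof (intro allI impI ballI)
  fix N :: "'n ring" and nact g
  assume N: "right_module A N nact" and g: "g \<in> HomC A G Agr X act M mact Mgr N nact"
  have "r_map A G Agr X act (cor_delta A X) (cor_e A z) N nact (g m) = g m" if m: "m \<in> carrier M" for m
  proof (rule r_map_concentrated[where act = act and z = z, OF graded N z fixed])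
    show "g m \<in> tensC N X" using g m unfolding HomC_def by blast
    show "\<forall>w. w \<noteq> z \<longrightarrow> g m w = \<zero>\<^bsub>N\<^esub>"
      using HomC_concentrated[OF abelian_M dsd_M right_moduleD(2)[OF N] g concentrated z m] by blast
  qed
  then show "\<exists>g'\<in>HomC A G Agr X act M mact Mgr N nact.
      \<forall>m\<in>carrier M. r_map A G Agr X act (cor_delta A X) (cor_e A z) N nact (g' m) = g m"
    using g by blast
qed

(* Conversely, lift the grading coaction of M (a comodule map M \<rightarrow> M \<otimes>_A C) through r_M;
   since r_M takes values in M \<otimes> (1 \<otimes> z), every component m_w with w \<noteq> z vanishes. *)
lemma smooth_imp_concentrated:
  fixes z :: 'x
  assumes z: "z \<in> X" and fixed: "\<forall>\<sigma>\<in>carrier G. act z \<sigma> = z"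
    and smooth: "formally_smooth TYPE('m) A G Agr X act (cor_delta A X) (cor_e A z) M mact Mgr"
  shows "carrier M = Mgr z"
proof
  interpret M: abelian_group M by (rule abelian_M)
  obtain g' where lift: "\<And>m. m \<in> carrier M \<Longrightarrow>
      r_map A G Agr X act (cor_delta A X) (cor_e A z) M mact (g' m) = (\<lambda>x. mod_coact M X Mgr x m)"
    using smooth[unfolded formally_smooth_def, rule_format, OF module_M coaction_HomC] by blast
  show "carrier M \<subseteq> Mgr z"
  proof
    fix m assume m: "m \<in> carrier M"
    have "dcomp M X Mgr w m = \<zero>\<^bsub>M\<^esub>" if "w \<noteq> z" for w
        using fun_cong[OF lift[OF m], of w]
        r_map_outside[where G = G and act = act and z = z, OF abelian_M fixed that]
      unfolding mod_coact_def by metis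
    then have "m = finsum M (\<lambda>i. dcomp M X Mgr i m) {z}"
      using z by (intro M.dcomp_sum[OF dsd_M m]) auto
    also have "\<dots> = dcomp M X Mgr z m" using M.dcomp_closed[OF dsd_M m] by simp
    finally show "m \<in> Mgr z" using M.dcomp_mem[OF dsd_M m z] by simp
  qed
  show "Mgr z \<subseteq> carrier M" by (rule M.dsd_subset[OF dsd_M z])
qed

end

theorem mainTheorem5:
  fixes A :: "'a ring" and G :: "'g monoid" and Agr :: "'g \<Rightarrow> 'a set"
    and X :: "'x set" and act :: "'x \<Rightarrow> 'g \<Rightarrow> 'x" and z :: 'x
    and M :: "'m ring" and mact :: "'m \<Rightarrow> 'a \<Rightarrow> 'm" and Mgr :: "'x \<Rightarrow> 'm set"
  assumes "graded_ring A G Agr"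
    and "right_Gset G X act"
    and "z \<in> X" and "\<forall>\<sigma>\<in>carrier G. act z \<sigma> = z"
    and "Xgraded_module A G Agr X act M mact Mgr"
  shows "(carrier M = Mgr z \<longrightarrow>
            formally_smooth TYPE('n) A G Agr X act (cor_delta A X) (cor_e A z) M mact Mgr)
       \<and> (formally_smooth TYPE('m) A G Agr X act (cor_delta A X) (cor_e A z) M mact Mgr \<longrightarrow>
            carrier M = Mgr z)"
  using concentrated_imp_smooth[OF assms(1,2,5,3,4)] smooth_imp_concentrated[OF assms(1,2,5,3,4)]
  by blast

end
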